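(* For $n\ge2$, the natural homomorphism from the abstract commensurator $\operatorname{Com}(\mathcal{H}_n)$ to the quasi-isometry group $\operatorname{QI}(\mathcal{H}_n)$ is injective.
   Context: Let $\mathbb{N}=\{1,2,3,\dots\}$, $\mathbb{Z}_n$ the integers modulo $n$, $R_n=\mathbb{Z}_n\times\mathbb{N}$. The Houghton group $\mathcal{H}_n$ is the group of permutations $\sigma$ of $R_n$ for which there exist $N\ge0$ and integers $t_i$ with $(i,k)\sigma=(i,k+t_i)$ for all $i\in\mathbb{Z}_n$, $k\ge N$ (right actions); it is finitely generated for $n\ge2$ and is given a word metric. A commensuration of a group $G$ is an isomorphism $\phi:A\to B$ between finite-index subgroups of $G$; two are equivalent if they agree on a finite-index subgroup; $\operatorname{Com}(G)$ is the group of equivalence classes. $\operatorname{QI}(G)$ is the group of quasi-isometries $G\to G$ modulo those at bounded distance from each other. A commensuration $\phi:A\to B$ is a quasi-isometry of $G$ (since $A,B$ are quasi-isometric to $G$ via inclusion), giving the natural homomorphism $\operatorname{Com}(G)\to\operatorname{QI}(G)$. *)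

theory Defs
  imports "HOL-Algebra.Algebra"
begin

text \<open>R_n = Z_n x N, with Z_n represented by {0..<n} and N = {1,2,...}.\<close>
definition Rn :: "nat \<Rightarrow> (nat \<times> nat) set" where
  "Rn n = {(i, k). i < n \<and> 1 \<le> k}"

definition houghton_carrier :: "nat \<Rightarrow> ((nat \<times> nat) \<Rightarrow> (nat \<times> nat)) set" where
  "houghton_carrier n =
     {\<sigma>. bij_betw \<sigma> (Rn n) (Rn n) \<and> (\<forall>x. x \<notin> Rn n \<longrightarrow> \<sigma> x = x) \<and>
          (\<exists>(N::nat) (t::nat \<Rightarrow> int). \<forall>i<n. \<forall>k. N \<le> k \<and> 1 \<le> k \<longrightarrow>
              fst (\<sigma> (i, k)) = i \<and> int (snd (\<sigma> (i, k))) = int k + t i)}"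

text \<open>Right actions: (x)(sigma tau) = ((x)sigma)tau, i.e. the product sigma tau is tau o sigma.\<close>
definition houghton :: "nat \<Rightarrow> ((nat \<times> nat) \<Rightarrow> (nat \<times> nat)) monoid" where
  "houghton n = \<lparr>carrier = houghton_carrier n, monoid.mult = (\<lambda>\<sigma> \<tau>. \<tau> \<circ> \<sigma>), monoid.one = id\<rparr>"

definition word_len :: "('a, 'b) monoid_scheme \<Rightarrow> 'a set \<Rightarrow> 'a \<Rightarrow> nat" where
  "word_len G S g = (LEAST k. \<exists>xs. length xs = k \<and> set xs \<subseteq> S \<union> m_inv G ` S \<and>
                               foldr (monoid.mult G) xs (monoid.one G) = g)"

definition word_dist :: "('a, 'b) monoid_scheme \<Rightarrow> 'a set \<Rightarrow> 'a \<Rightarrow> 'a \<Rightarrow> nat" where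
  "word_dist G S g h = word_len G S (monoid.mult G (m_inv G g) h)"

definition finite_index :: "('a, 'b) monoid_scheme \<Rightarrow> 'a set \<Rightarrow> bool" where
  "finite_index G A \<longleftrightarrow> subgroup A G \<and> finite (rcosets\<^bsub>G\<^esub> A)"

definition commensuration ::
    "('a, 'b) monoid_scheme \<Rightarrow> 'a set \<Rightarrow> 'a set \<Rightarrow> ('a \<Rightarrow> 'a) \<Rightarrow> bool" where
  "commensuration G A B \<phi> \<longleftrightarrow> finite_index G A \<and> finite_index G B \<and>
     \<phi> \<in> iso (G\<lparr>carrier := A\<rparr>) (G\<lparr>carrier := B\<rparr>)"

definition comm_equiv ::
    "('a, 'b) monoid_scheme \<Rightarrow> 'a set \<Rightarrow> ('a \<Rightarrow> 'a) \<Rightarrow> 'a set \<Rightarrow> ('a \<Rightarrow> 'a) \<Rightarrow> bool" where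
  "comm_equiv G A \<phi> A' \<psi> \<longleftrightarrow>
     (\<exists>C. finite_index G C \<and> C \<subseteq> A \<and> C \<subseteq> A' \<and> (\<forall>g\<in>C. \<phi> g = \<psi> g))"

text \<open>A closest point of A to g in the word metric (a coarse inverse of the inclusion A -> G).\<close>
definition nearest :: "('a, 'b) monoid_scheme \<Rightarrow> 'a set \<Rightarrow> 'a set \<Rightarrow> 'a \<Rightarrow> 'a" where
  "nearest G S A g = (SOME a. a \<in> A \<and> (\<forall>b\<in>A. word_dist G S g a \<le> word_dist G S g b))"

definition comm_qi :: "('a, 'b) monoid_scheme \<Rightarrow> 'a set \<Rightarrow> 'a set \<Rightarrow> ('a \<Rightarrow> 'a) \<Rightarrow> 'a \<Rightarrow> 'a" where
  "comm_qi G S A \<phi> = (\<lambda>g. \<phi> (nearest G S A g))"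

text \<open>Two maps G -> G at bounded distance (same class in QI(G)).\<close>
definition bounded_distance ::
    "('a, 'b) monoid_scheme \<Rightarrow> 'a set \<Rightarrow> ('a \<Rightarrow> 'a) \<Rightarrow> ('a \<Rightarrow> 'a) \<Rightarrow> bool" where
  "bounded_distance G S f f' \<longleftrightarrow> (\<exists>C::nat. \<forall>g\<in>carrier G. word_dist G S (f g) (f' g) \<le> C)"

end

theory Submission
  imports Defs "HOL-Combinatorics.Transposition"
begin

text \<open>
  Let \<open>\<phi> : A \<rightarrow> B\<close> and \<open>\<psi> : A' \<rightarrow> B'\<close> be commensurations at bounded distance, and put
  \<open>e g = \<phi>(g)\<inverse> \<psi>(g)\<close> on the finite index subgroup \<open>C = A \<inter> A'\<close>. Bounded distance means that
  \<open>e\<close> takes only finitely many values, and the cocycle identity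
  \<open>\<phi>(h)\<inverse> e(g) \<phi>(h) = e(gh) e(h)\<inverse>\<close> shows that \<open>e(g)\<close> has only finitely many conjugates by
  elements of \<open>\<phi>(C)\<close>. Since every element of \<open>G\<close> has a power in \<open>\<phi>(C)\<close>, some power of every
  element of \<open>G\<close> commutes with \<open>e(g)\<close>. In the Houghton group no nontrivial element has this
  property: if \<open>x\<close> moves \<open>p\<close> to \<open>q\<close>, a conjugate of a translation along two rays fixes \<open>p\<close>
  and moves \<open>q\<close> along an infinite orbit, and none of its powers commutes with \<open>x\<close>.
  Hence \<open>e = 1\<close>, i.e. \<open>\<phi> = \<psi>\<close> on \<open>C\<close>.
\<close>

definition power_central :: "('a, 'b) monoid_scheme \<Rightarrow> 'a \<Rightarrow> bool" where
  "power_central G x \<longleftrightarrow>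
     (\<forall>y\<in>carrier G. \<exists>k\<ge>1. y [^]\<^bsub>G\<^esub> (k::nat) \<otimes>\<^bsub>G\<^esub> x = x \<otimes>\<^bsub>G\<^esub> y [^]\<^bsub>G\<^esub> k)"

lemma finite_range_nat_repeats:
  fixes f :: "nat \<Rightarrow> 'a"
  assumes "finite (range f)"
  shows "\<exists>i j. i < j \<and> f i = f j"
proof -
  have "\<not> inj f" using assms finite_imageD infinite_UNIV_nat by blast
  then obtain i j where "i \<noteq> j" "f i = f j" unfolding inj_def by blast
  then show ?thesis by (metis linorder_neqE_nat)
qed

context group
begin

lemma mult_inv_cancel_left [simp]: "s \<in> carrier G \<Longrightarrow> z \<in> carrier G \<Longrightarrow> s \<otimes> (inv s \<otimes> z) = z"
  by (simp add: m_assoc[symmetric])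

lemma subgroup_nat_pow_closed: "subgroup H G \<Longrightarrow> h \<in> H \<Longrightarrow> h [^] (k::nat) \<in> H"
  by (induction k) (simp_all add: subgroup.one_closed subgroup.m_closed)

lemma conj_nat_pow:
  assumes "s \<in> carrier G" "y \<in> carrier G"
  shows "(inv s \<otimes> y \<otimes> s) [^] (k::nat) = inv s \<otimes> y [^] k \<otimes> s"
  using assms by (induction k) (simp_all add: m_assoc)

lemma conj_inv_mult_eq:
  assumes "a \<in> carrier G" "b \<in> carrier G" "c \<in> carrier G" "d \<in> carrier G"
  shows "inv b \<otimes> (inv a \<otimes> c) \<otimes> b = inv (a \<otimes> b) \<otimes> (c \<otimes> d) \<otimes> inv (inv b \<otimes> d)"
  using assms by (simp add: inv_mult_group m_assoc)

lemma nat_pow_commute_if_conj_eq: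
  assumes x: "x \<in> carrier G" and u: "u \<in> carrier G" and "i < l"
    and eq: "inv (u [^] i) \<otimes> x \<otimes> u [^] i = inv (u [^] l) \<otimes> x \<otimes> u [^] (l::nat)"
  shows "u [^] (l - i) \<otimes> x = x \<otimes> u [^] (l - i)"
proof -
  define P where "P = u [^] i"
  define D where "D = u [^] (l - i)"
  have P: "P \<in> carrier G" and D: "D \<in> carrier G" using u by (auto simp: P_def D_def)
  have "u [^] l = D \<otimes> P" using nat_pow_mult[OF u, of "l - i" i] \<open>i < l\<close> by (simp add: P_def D_def)
  with eq have "inv P \<otimes> x \<otimes> P = inv (D \<otimes> P) \<otimes> x \<otimes> (D \<otimes> P)" by (simp add: P_def)
  then have "P \<otimes> (inv P \<otimes> x \<otimes> P) \<otimes> inv P = P \<otimes> (inv (D \<otimes> P) \<otimes> x \<otimes> (D \<otimes> P)) \<otimes> inv P"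
    by simp
  then have "x = inv D \<otimes> (x \<otimes> D)" using P D x by (simp add: m_assoc inv_mult_group)
  then have "D \<otimes> x = D \<otimes> (inv D \<otimes> (x \<otimes> D))" by simp
  also have "\<dots> = x \<otimes> D" using D x by simp
  finally show ?thesis by (simp add: D_def)
qed

lemma nat_pow_commute_if_finite_conjugates:
  assumes x: "x \<in> carrier G" and u: "u \<in> carrier G"
    and fin: "finite (range (\<lambda>j::nat. inv (u [^] j) \<otimes> x \<otimes> u [^] j))"
  shows "\<exists>k\<ge>1. u [^] (k::nat) \<otimes> x = x \<otimes> u [^] k"
proof -
  obtain i l :: nat where "i < l" and "inv (u [^] i) \<otimes> x \<otimes> u [^] i = inv (u [^] l) \<otimes> x \<otimes> u [^] l"
    using finite_range_nat_repeats[OF fin] by blast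
  with nat_pow_commute_if_conj_eq[OF x u] show ?thesis
    by (intro exI[of _ "l - i"]) auto
qed

lemma finite_index_nat_pow_mem:
  assumes H: "finite_index G H" and g: "g \<in> carrier G"
  shows "\<exists>k\<ge>1. g [^] (k::nat) \<in> H"
proof -
  have sg: "subgroup H G" and fin: "finite (rcosets H)" using H by (auto simp: finite_index_def)
  have "range (\<lambda>j::nat. H #> g [^] j) \<subseteq> rcosets H"
    using sg g by (auto intro!: rcosetsI subgroup.subset)
  with fin have "finite (range (\<lambda>j::nat. H #> g [^] j))" using finite_subset by blast
  then obtain i j :: nat where ij: "i < j" "H #> g [^] i = H #> g [^] j"
    using finite_range_nat_repeats by blast
  have "g [^] j \<in> H #> g [^] i"
    unfolding ij(2) using rcos_self[of "g [^] j" H] sg g by blast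
  then obtain h where h: "h \<in> H" "g [^] j = h \<otimes> g [^] i" unfolding r_coset_def by blast
  have "g [^] j = g [^] (j - i) \<otimes> g [^] i" using nat_pow_mult[OF g, of "j - i" i] ij by simp
  then have "g [^] (j - i) = h"
    using h g subgroup.mem_carrier[OF sg] by (metis nat_pow_closed right_cancel)
  with h ij show ?thesis by (intro exI[of _ "j - i"]) auto
qed

lemma finite_index_Int:
  assumes A: "finite_index G A" and B: "finite_index G B"
  shows "finite_index G (A \<inter> B)"
proof -
  have sA: "subgroup A G" and fA: "finite (rcosets A)" using A by (auto simp: finite_index_def)
  have sB: "subgroup B G" and fB: "finite (rcosets B)" using B by (auto simp: finite_index_def)
  have coset_Int: "(A \<inter> B) #> g = (A #> g) \<inter> (B #> g)" if g: "g \<in> carrier G" for g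
  proof
    show "(A #> g) \<inter> (B #> g) \<subseteq> (A \<inter> B) #> g"
    proof
      fix x assume "x \<in> (A #> g) \<inter> (B #> g)"
      then obtain a b where ab: "a \<in> A" "b \<in> B" "x = a \<otimes> g" "x = b \<otimes> g"
        unfolding r_coset_def by blast
      then have "a = b" using g subgroup.mem_carrier[OF sA] subgroup.mem_carrier[OF sB] right_cancel
        by metis
      with ab show "x \<in> (A \<inter> B) #> g" unfolding r_coset_def by blast
    qed
  qed (auto simp: r_coset_def)
  have "rcosets (A \<inter> B) \<subseteq> (\<lambda>(U, V). U \<inter> V) ` ((rcosets A) \<times> (rcosets B))"
  proof
    fix Z assume "Z \<in> rcosets (A \<inter> B)"
    then obtain g where g: "g \<in> carrier G" "Z = (A \<inter> B) #> g" unfolding RCOSETS_def by blast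
    moreover have "A #> g \<in> rcosets A" "B #> g \<in> rcosets B"
      using g sA sB by (auto intro!: rcosetsI subgroup.subset)
    ultimately show "Z \<in> (\<lambda>(U, V). U \<inter> V) ` ((rcosets A) \<times> (rcosets B))"
      using coset_Int by force
  qed
  then have "finite (rcosets (A \<inter> B))" using fA fB finite_subset by fastforce
  then show ?thesis using subgroups_Inter_pair[OF sA sB] by (simp add: finite_index_def)
qed

end

lemma (in monoid) foldr_mult_closed:
  "set xs \<subseteq> carrier G \<Longrightarrow> a \<in> carrier G \<Longrightarrow>
     foldr (\<otimes>) xs \<one> \<in> carrier G \<and> foldr (\<otimes>) xs a = foldr (\<otimes>) xs \<one> \<otimes> a"
  by (induction xs) (auto simp: m_assoc)

lemma (in group) generate_word:
  assumes S: "S \<subseteq> carrier G" and x: "x \<in> generate G S"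
  shows "\<exists>xs. set xs \<subseteq> S \<union> m_inv G ` S \<and> foldr (\<otimes>) xs \<one> = x"
  using x
proof (induction rule: generate.induct)
  case one then show ?case by (intro exI[of _ "[]"]) simp
next
  case (incl h) then show ?case using S by (intro exI[of _ "[h]"]) auto
next
  case (inv h) then show ?case using S by (intro exI[of _ "[inv h]"]) auto
next
  case (eng h1 h2)
  then obtain xs ys where xs: "set xs \<subseteq> S \<union> m_inv G ` S" "foldr (\<otimes>) xs \<one> = h1"
    and ys: "set ys \<subseteq> S \<union> m_inv G ` S" "foldr (\<otimes>) ys \<one> = h2" by blast
  have "S \<union> m_inv G ` S \<subseteq> carrier G" using S by auto
  with xs ys have "foldr (\<otimes>) (xs @ ys) \<one> = h1 \<otimes> h2"
    using foldr_mult_closed[of xs "foldr (\<otimes>) ys \<one>"] foldr_mult_closed[of ys \<one>] by auto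
  with xs ys show ?case by (intro exI[of _ "xs @ ys"]) auto
qed

locale generated_group = group G for G (structure) +
  fixes S
  assumes generators_closed: "S \<subseteq> carrier G" and generate_eq: "generate G S = carrier G"
begin

lemma word_len_word:
  assumes "x \<in> carrier G"
  shows "\<exists>xs. length xs = word_len G S x \<and> set xs \<subseteq> S \<union> m_inv G ` S \<and> foldr (\<otimes>) xs \<one> = x"
proof -
  have "\<exists>k xs. length xs = k \<and> set xs \<subseteq> S \<union> m_inv G ` S \<and> foldr (\<otimes>) xs \<one> = x"
    using generate_word[OF generators_closed] assms generate_eq by auto
  then show ?thesis unfolding word_len_def by (rule LeastI_ex)
qed

lemma word_len_eq_0_iff:
  assumes "x \<in> carrier G"
  shows "word_len G S x = 0 \<longleftrightarrow> x = \<one>"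
proof
  show "word_len G S x = 0 \<Longrightarrow> x = \<one>" using word_len_word[OF assms] by fastforce
  show "x = \<one> \<Longrightarrow> word_len G S x = 0"
    unfolding word_len_def by (rule Least_eq_0) (intro exI[of _ "[]"], simp)
qed

lemma finite_word_ball:
  assumes "finite S"
  shows "finite {x \<in> carrier G. word_len G S x \<le> K}"
proof -
  have "{x \<in> carrier G. word_len G S x \<le> K} \<subseteq>
          (\<lambda>xs. foldr (\<otimes>) xs \<one>) ` {xs. set xs \<subseteq> S \<union> m_inv G ` S \<and> length xs \<le> K}"
    using word_len_word by force
  moreover have "finite {xs. set xs \<subseteq> S \<union> m_inv G ` S \<and> length xs \<le> K}"
    using assms by (intro finite_lists_length_le) auto
  ultimately show ?thesis using finite_subset by blast
qed

lemma nearest_self: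
  assumes A: "subgroup A G" and g: "g \<in> A"
  shows "nearest G S A g = g"
proof -
  have gc: "g \<in> carrier G" using subgroup.mem_carrier[OF A g] .
  have d0: "word_dist G S g g = 0" using gc word_len_eq_0_iff by (simp add: word_dist_def)
  define a where "a = nearest G S A g"
  have "\<exists>a. a \<in> A \<and> (\<forall>b\<in>A. word_dist G S g a \<le> word_dist G S g b)"
    using g d0 by (intro exI[of _ g]) simp
  then have aA: "a \<in> A" and "\<forall>b\<in>A. word_dist G S g a \<le> word_dist G S g b"
    unfolding a_def nearest_def by (rule someI_ex[THEN conjunct1], rule someI_ex[THEN conjunct2])
  with g d0 have "word_dist G S g a = 0" by fastforce
  moreover have ac: "a \<in> carrier G" using subgroup.mem_carrier[OF A aA] .
  ultimately have "inv g \<otimes> a = \<one>" using gc word_len_eq_0_iff by (simp add: word_dist_def)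
  have "a = g \<otimes> (inv g \<otimes> a)" using gc ac by (rule mult_inv_cancel_left[symmetric])
  also have "\<dots> = g" using \<open>inv g \<otimes> a = \<one>\<close> gc by simp
  finally show ?thesis by (simp add: a_def)
qed

end

context group
begin

lemma commensuration_closed:
  assumes "commensuration G A B \<phi>" and "a \<in> A"
  shows "\<phi> a \<in> carrier G"
proof -
  have "bij_betw \<phi> A B" and "subgroup B G"
    using assms(1) by (auto simp: commensuration_def finite_index_def iso_def)
  with assms(2) show ?thesis by (meson bij_betwE subgroup.mem_carrier)
qed

lemma commensuration_mult:
  assumes "commensuration G A B \<phi>" and "a \<in> A" and "b \<in> A"
  shows "\<phi> (a \<otimes> b) = \<phi> a \<otimes> \<phi> b"
  using assms by (auto simp: commensuration_def iso_def hom_def)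

lemma commensuration_nat_pow:
  assumes "commensuration G A B \<phi>" and "z \<in> A"
  shows "\<phi> (z [^] (m::nat)) = \<phi> z [^] m"
proof -
  have sA: "subgroup A G" and sB: "subgroup B G"
    and hom: "\<phi> \<in> hom (G\<lparr>carrier := A\<rparr>) (G\<lparr>carrier := B\<rparr>)"
    using assms(1) by (auto simp: commensuration_def finite_index_def iso_def)
  have "\<phi> (z [^]\<^bsub>G\<lparr>carrier := A\<rparr>\<^esub> m) = \<phi> z [^]\<^bsub>G\<lparr>carrier := B\<rparr>\<^esub> m"
    using hom_nat_pow[OF hom] assms(2) subgroup.subgroup_is_group[OF sA is_group]
      subgroup.subgroup_is_group[OF sB is_group] by simp
  then show ?thesis by (simp add: nat_pow_consistent[symmetric])
qed

lemma commensuration_image_nat_pow: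
  assumes c: "commensuration G A B \<phi>" and C: "finite_index G C" "C \<subseteq> A"
    and y: "y \<in> carrier G"
  shows "\<exists>w\<in>C. \<exists>m\<ge>1. \<phi> w = y [^] (m::nat)"
proof -
  have B: "finite_index G B" and sA: "subgroup A G" and "bij_betw \<phi> A B"
    using c by (auto simp: commensuration_def finite_index_def iso_def)
  obtain a :: nat where a: "a \<ge> 1" "y [^] a \<in> B" using finite_index_nat_pow_mem[OF B y] by blast
  with \<open>bij_betw \<phi> A B\<close> obtain z where z: "z \<in> A" "\<phi> z = y [^] a"
    by (metis bij_betw_def imageE)
  obtain b :: nat where b: "b \<ge> 1" "z [^] b \<in> C"
    using finite_index_nat_pow_mem[OF C(1) subgroup.mem_carrier[OF sA z(1)]] by blast
  have "\<phi> (z [^] b) = y [^] (a * b)"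
    using commensuration_nat_pow[OF c z(1)] z(2) nat_pow_pow[OF y] by simp
  with a b show ?thesis by (intro bexI[of _ "z [^] b"] exI[of _ "a * b"]) auto
qed

end

lemma (in generated_group) finite_defects_if_bounded_distance:
  assumes "finite S" and "subgroup A G" and "subgroup A' G"
    and \<phi>: "\<And>g. g \<in> A \<Longrightarrow> \<phi> g \<in> carrier G" and \<psi>: "\<And>g. g \<in> A' \<Longrightarrow> \<psi> g \<in> carrier G"
    and "bounded_distance G S (comm_qi G S A \<phi>) (comm_qi G S A' \<psi>)"
  shows "finite ((\<lambda>g. inv (\<phi> g) \<otimes> \<psi> g) ` (A \<inter> A'))"
proof -
  obtain K where K: "\<forall>g\<in>carrier G. word_dist G S (comm_qi G S A \<phi> g) (comm_qi G S A' \<psi> g) \<le> K"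
    using assms(6) unfolding bounded_distance_def by blast
  have "word_len G S (inv (\<phi> g) \<otimes> \<psi> g) \<le> K" if g: "g \<in> A \<inter> A'" for g
  proof -
    have "comm_qi G S A \<phi> g = \<phi> g" "comm_qi G S A' \<psi> g = \<psi> g"
      using nearest_self[OF assms(2)] nearest_self[OF assms(3)] g by (simp_all add: comm_qi_def)
    with K subgroup.mem_carrier[OF assms(2)] g show ?thesis by (force simp: word_dist_def)
  qed
  then have "(\<lambda>g. inv (\<phi> g) \<otimes> \<psi> g) ` (A \<inter> A') \<subseteq> {x \<in> carrier G. word_len G S x \<le> K}"
    using \<phi> \<psi> by auto
  then show ?thesis using finite_word_ball[OF assms(1)] finite_subset by blast
qed

lemma (in group) power_central_if_finite_defects:
  assumes c1: "commensuration G A B \<phi>" and c2: "commensuration G A' B' \<psi>"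
    and fC: "finite_index G C" and CA: "C \<subseteq> A \<inter> A'"
    and fin: "finite ((\<lambda>g. inv (\<phi> g) \<otimes> \<psi> g) ` C)" and g: "g \<in> C"
  shows "power_central G (inv (\<phi> g) \<otimes> \<psi> g)"
  unfolding power_central_def
proof
  define e where "e g = inv (\<phi> g) \<otimes> \<psi> g" for g
  have sC: "subgroup C G" using fC by (simp add: finite_index_def)
  have carrier: "\<phi> h \<in> carrier G" "\<psi> h \<in> carrier G" if "h \<in> C" for h
    using that CA commensuration_closed[OF c1] commensuration_closed[OF c2] by auto
  fix y assume y: "y \<in> carrier G"
  obtain w m where w: "w \<in> C" and m: "m \<ge> 1" "\<phi> w = y [^] (m::nat)"
    using commensuration_image_nat_pow[OF c1 fC _ y] CA by auto
  have "inv ((y [^] m) [^] j) \<otimes> e g \<otimes> (y [^] m) [^] j \<in> (\<lambda>(a, b). a \<otimes> inv b) ` (e ` C \<times> e ` C)"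
    for j :: nat
  proof -
    have wj: "w [^] j \<in> C" using subgroup_nat_pow_closed[OF sC w] .
    have "\<phi> (w [^] j) = (y [^] m) [^] j" using commensuration_nat_pow[OF c1] w CA m(2) by auto
    moreover have "\<phi> (g \<otimes> w [^] j) = \<phi> g \<otimes> \<phi> (w [^] j)" "\<psi> (g \<otimes> w [^] j) = \<psi> g \<otimes> \<psi> (w [^] j)"
      using commensuration_mult[OF c1, of g "w [^] j"] commensuration_mult[OF c2, of g "w [^] j"]
        g wj CA by blast+
    then have "inv (\<phi> (w [^] j)) \<otimes> e g \<otimes> \<phi> (w [^] j) = e (g \<otimes> w [^] j) \<otimes> inv (e (w [^] j))"
      using conj_inv_mult_eq[of "\<phi> g" "\<phi> (w [^] j)" "\<psi> g" "\<psi> (w [^] j)"] carrier[OF g] carrier[OF wj]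
      by (simp add: e_def)
    ultimately show ?thesis using subgroup.m_closed[OF sC g wj] wj by force
  qed
  then have "range (\<lambda>j::nat. inv ((y [^] m) [^] j) \<otimes> e g \<otimes> (y [^] m) [^] j)
               \<subseteq> (\<lambda>(a, b). a \<otimes> inv b) ` (e ` C \<times> e ` C)"
    by blast
  moreover have "finite (e ` C)" using fin by (simp add: e_def)
  ultimately have "finite (range (\<lambda>j::nat. inv ((y [^] m) [^] j) \<otimes> e g \<otimes> (y [^] m) [^] j))"
    using finite_subset by blast
  then obtain k :: nat where "k \<ge> 1" "(y [^] m) [^] k \<otimes> e g = e g \<otimes> (y [^] m) [^] k"
    using nat_pow_commute_if_finite_conjugates[of "e g" "y [^] m"] carrier[OF g] y by (auto simp: e_def)
  with m(1) y show "\<exists>k\<ge>1. y [^] (k::nat) \<otimes> (inv (\<phi> g) \<otimes> \<psi> g) = inv (\<phi> g) \<otimes> \<psi> g \<otimes> y [^] k"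
    by (intro exI[of _ "m * k"]) (simp add: nat_pow_pow e_def)
qed

lemma (in generated_group) comm_equiv_if_bounded_distance:
  assumes "finite S"
    and power_central_trivial: "\<And>x. x \<in> carrier G \<Longrightarrow> power_central G x \<Longrightarrow> x = \<one>"
    and c1: "commensuration G A B \<phi>" and c2: "commensuration G A' B' \<psi>"
    and "bounded_distance G S (comm_qi G S A \<phi>) (comm_qi G S A' \<psi>)"
  shows "comm_equiv G A \<phi> A' \<psi>"
proof -
  have fC: "finite_index G (A \<inter> A')"
    using c1 c2 by (intro finite_index_Int) (auto simp: commensuration_def)
  have carrier: "\<phi> g \<in> carrier G" "\<psi> g \<in> carrier G" if "g \<in> A \<inter> A'" for g
    using that commensuration_closed[OF c1] commensuration_closed[OF c2] by auto
  have "subgroup A G" "subgroup A' G"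
    using c1 c2 by (auto simp: commensuration_def finite_index_def)
  then have "finite ((\<lambda>g. inv (\<phi> g) \<otimes> \<psi> g) ` (A \<inter> A'))"
    using commensuration_closed[OF c1] commensuration_closed[OF c2] assms(5)
    by (rule finite_defects_if_bounded_distance[OF assms(1)])
  then have "inv (\<phi> g) \<otimes> \<psi> g = \<one>" if "g \<in> A \<inter> A'" for g
    using power_central_if_finite_defects[OF c1 c2 fC _ _ that] power_central_trivial carrier[OF that]
    by simp
  then have "\<phi> g = \<psi> g" if "g \<in> A \<inter> A'" for g
    using carrier[OF that] by (metis inv_solve_left one_closed r_one that)
  with fC show ?thesis unfolding comm_equiv_def by blast
qed

lemma Rn_iff [simp]: "(i, k) \<in> Rn n \<longleftrightarrow> i < n \<and> 1 \<le> k"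
  by (simp add: Rn_def)

lemma mem_houghton_carrier:
  "\<sigma> \<in> houghton_carrier n \<longleftrightarrow> bij_betw \<sigma> (Rn n) (Rn n) \<and> (\<forall>x. x \<notin> Rn n \<longrightarrow> \<sigma> x = x) \<and>
     (\<exists>(N::nat) (t::nat \<Rightarrow> int). \<forall>i<n. \<forall>k. N \<le> k \<and> 1 \<le> k \<longrightarrow>
        fst (\<sigma> (i, k)) = i \<and> int (snd (\<sigma> (i, k))) = int k + t i)"
  by (simp add: houghton_carrier_def)

lemma houghton_carrier_bij_betw: "\<sigma> \<in> houghton_carrier n \<Longrightarrow> bij_betw \<sigma> (Rn n) (Rn n)"
  unfolding mem_houghton_carrier by (rule conjunct1)

lemma houghton_carrier_fixes: "\<sigma> \<in> houghton_carrier n \<Longrightarrow> z \<notin> Rn n \<Longrightarrow> \<sigma> z = z"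
  unfolding mem_houghton_carrier by blast

lemma houghton_carrier_comp:
  assumes "\<sigma> \<in> houghton_carrier n" and "\<tau> \<in> houghton_carrier n"
  shows "\<tau> \<circ> \<sigma> \<in> houghton_carrier n"
proof -
  obtain N1 t1 where bs: "bij_betw \<sigma> (Rn n) (Rn n)" and os: "\<forall>x. x \<notin> Rn n \<longrightarrow> \<sigma> x = x"
    and es: "\<forall>i<n. \<forall>k. N1 \<le> k \<and> 1 \<le> k \<longrightarrow> fst (\<sigma> (i, k)) = i \<and> int (snd (\<sigma> (i, k))) = int k + t1 i"
    using assms(1) unfolding mem_houghton_carrier by blast
  obtain N2 t2 where bt: "bij_betw \<tau> (Rn n) (Rn n)" and ot: "\<forall>x. x \<notin> Rn n \<longrightarrow> \<tau> x = x"
    and et: "\<forall>i<n. \<forall>k. N2 \<le> k \<and> 1 \<le> k \<longrightarrow> fst (\<tau> (i, k)) = i \<and> int (snd (\<tau> (i, k))) = int k + t2 i"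
    using assms(2) unfolding mem_houghton_carrier by blast
  text \<open>Beyond \<open>M\<close> the translation by \<open>\<sigma>\<close> lands beyond \<open>N2\<close>, where \<open>\<tau>\<close> translates too.\<close>
  define M where "M = N1 + N2 + (\<Sum>j<n. nat \<bar>t1 j\<bar>)"
  have "fst ((\<tau> \<circ> \<sigma>) (i, k)) = i \<and> int (snd ((\<tau> \<circ> \<sigma>) (i, k))) = int k + (t1 i + t2 i)"
    if i: "i < n" and k: "M \<le> k" "1 \<le> k" for i k
  proof -
    have "nat \<bar>t1 i\<bar> \<le> (\<Sum>j<n. nat \<bar>t1 j\<bar>)" using i by (intro member_le_sum) auto
    moreover obtain b where b: "\<sigma> (i, k) = (i, b)" "int b = int k + t1 i"
      using es i k unfolding M_def by (metis add_leD1 prod.collapse)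
    moreover have "1 \<le> b" using bij_betwE[OF bs] b(1) i k by (metis Rn_iff)
    ultimately have "fst (\<tau> (i, b)) = i \<and> int (snd (\<tau> (i, b))) = int b + t2 i"
      using et i k unfolding M_def by simp
    then show ?thesis using b by simp
  qed
  moreover have "bij_betw (\<tau> \<circ> \<sigma>) (Rn n) (Rn n)" using bs bt bij_betw_trans by blast
  moreover have "\<forall>x. x \<notin> Rn n \<longrightarrow> (\<tau> \<circ> \<sigma>) x = x" using os ot by simp
  ultimately show ?thesis unfolding mem_houghton_carrier
    by (intro conjI exI[of _ M] exI[of _ "\<lambda>i. t1 i + t2 i"]) auto
qed

definition houghton_inv :: "nat \<Rightarrow> ((nat \<times> nat) \<Rightarrow> (nat \<times> nat)) \<Rightarrow> (nat \<times> nat) \<Rightarrow> (nat \<times> nat)" where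
  "houghton_inv n \<sigma> = (\<lambda>x. if x \<in> Rn n then inv_into (Rn n) \<sigma> x else x)"

lemma houghton_inv_carrier:
  assumes "\<sigma> \<in> houghton_carrier n"
  shows "houghton_inv n \<sigma> \<in> houghton_carrier n" and "\<sigma> \<circ> houghton_inv n \<sigma> = id"
proof -
  obtain N t where bs: "bij_betw \<sigma> (Rn n) (Rn n)" and os: "\<forall>x. x \<notin> Rn n \<longrightarrow> \<sigma> x = x"
    and es: "\<forall>i<n. \<forall>k. N \<le> k \<and> 1 \<le> k \<longrightarrow> fst (\<sigma> (i, k)) = i \<and> int (snd (\<sigma> (i, k))) = int k + t i"
    using assms unfolding mem_houghton_carrier by blast
  have "bij_betw (inv_into (Rn n) \<sigma>) (Rn n) (Rn n)" using bs bij_betw_inv_into by blast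
  then have bij: "bij_betw (houghton_inv n \<sigma>) (Rn n) (Rn n)"
    by (rule bij_betw_cong[THEN iffD1, rotated]) (simp add: houghton_inv_def)
  define M where "M = N + (\<Sum>j<n. nat \<bar>t j\<bar>) + 1"
  have "fst (houghton_inv n \<sigma> (i, k)) = i \<and> int (snd (houghton_inv n \<sigma> (i, k))) = int k + - t i"
    if i: "i < n" and k: "M \<le> k" "1 \<le> k" for i k
  proof -
    have "nat \<bar>t i\<bar> \<le> (\<Sum>j<n. nat \<bar>t j\<bar>)" using i by (intro member_le_sum) auto
    then obtain j where j: "int j = int k - t i" "N \<le> j" "1 \<le> j"
      using k unfolding M_def by (intro that[of "nat (int k - t i)"]) linarith+
    then have "\<sigma> (i, j) = (i, k)" using es i by (metis add_diff_cancel_left' diff_add_cancel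
        nat_int prod.collapse)
    then have "inv_into (Rn n) \<sigma> (i, k) = (i, j)"
      using bs i j by (metis Rn_iff bij_betw_def inv_into_f_f)
    then show ?thesis using i k j by (simp add: houghton_inv_def)
  qed
  moreover have "\<forall>x. x \<notin> Rn n \<longrightarrow> houghton_inv n \<sigma> x = x" by (simp add: houghton_inv_def)
  ultimately show "houghton_inv n \<sigma> \<in> houghton_carrier n" using bij unfolding mem_houghton_carrier
    by (intro conjI exI[of _ M] exI[of _ "\<lambda>i. - t i"]) auto
  show "\<sigma> \<circ> houghton_inv n \<sigma> = id"
    using bs os by (auto simp: fun_eq_iff houghton_inv_def bij_betw_def f_inv_into_f)
qed

lemma group_houghton: "group (houghton n)"
proof (rule groupI)
  show "\<one>\<^bsub>houghton n\<^esub> \<in> carrier (houghton n)"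
    by (auto simp: houghton_def mem_houghton_carrier intro!: exI[of _ 0] exI[of _ "\<lambda>_. 0"])
next
  fix x assume "x \<in> carrier (houghton n)"
  then show "\<exists>y\<in>carrier (houghton n). y \<otimes>\<^bsub>houghton n\<^esub> x = \<one>\<^bsub>houghton n\<^esub>"
    using houghton_inv_carrier[of x n] by (auto simp: houghton_def)
qed (auto simp: houghton_def houghton_carrier_comp comp_assoc)

lemma houghton_mult [simp]: "x \<otimes>\<^bsub>houghton n\<^esub> y = y \<circ> x"
  by (simp add: houghton_def)

lemma houghton_one [simp]: "\<one>\<^bsub>houghton n\<^esub> = id"
  by (simp add: houghton_def)

lemma carrier_houghton [simp]: "carrier (houghton n) = houghton_carrier n"
  by (simp add: houghton_def)

lemma houghton_nat_pow: "x [^]\<^bsub>houghton n\<^esub> (k::nat) = x ^^ k"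
  by (induction k) (simp_all add: funpow_Suc_right)

lemma houghton_m_inv_apply:
  assumes "\<sigma> \<in> houghton_carrier n"
  shows "m_inv (houghton n) \<sigma> (\<sigma> z) = z"
proof -
  interpret group "houghton n" by (rule group_houghton)
  have "\<sigma> \<otimes>\<^bsub>houghton n\<^esub> m_inv (houghton n) \<sigma> = \<one>\<^bsub>houghton n\<^esub>"
    by (rule r_inv) (simp add: assms)
  then show ?thesis by (metis comp_apply houghton_mult houghton_one id_apply)
qed

lemma transpose_in_houghton_carrier:
  assumes "a \<in> Rn n" and "b \<in> Rn n"
  shows "transpose a b \<in> houghton_carrier n"
proof -
  have bij: "bij_betw (transpose a b) (Rn n) (Rn n)"
    by (rule bij_betw_byWitness[where f' = "transpose a b"]) (use assms in \<open>auto simp: transpose_def\<close>)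
  have fixed: "\<forall>x. x \<notin> Rn n \<longrightarrow> transpose a b x = x"
    using assms by (auto simp: transpose_def)
  have translation: "\<forall>i<n. \<forall>k. snd a + snd b + 1 \<le> k \<and> 1 \<le> k \<longrightarrow>
      fst (transpose a b (i, k)) = i \<and> int (snd (transpose a b (i, k))) = int k + 0"
    by (auto simp: transpose_def)
  show ?thesis unfolding mem_houghton_carrier
    by (intro conjI bij fixed exI[of _ "snd a + snd b + 1"] exI[of _ "\<lambda>_. 0"] translation)
qed

lemma houghton_two_transitive:
  assumes "a \<in> Rn n" "b \<in> Rn n" "a \<noteq> b" and "p \<in> Rn n" "q \<in> Rn n" "p \<noteq> q"
  shows "\<exists>\<sigma>\<in>houghton_carrier n. \<sigma> a = p \<and> \<sigma> b = q"
proof -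
  define q' where "q' = transpose a p q"
  have "q' \<in> Rn n" using assms by (auto simp: q'_def transpose_def)
  then have "transpose a p \<circ> transpose b q' \<in> houghton_carrier n"
    using assms by (intro houghton_carrier_comp transpose_in_houghton_carrier)
  moreover have "q' \<noteq> a" using assms by (auto simp: q'_def transpose_def)
  ultimately show ?thesis using assms
    by (intro bexI[of _ "transpose a p \<circ> transpose b q'"]) (auto simp: q'_def transpose_def)
qed

text \<open>The translation by one step along the line formed by rays 1 and 0 with the point \<open>(0,1)\<close>
  removed; it fixes \<open>(0,1)\<close>.\<close>
definition ray_shift :: "(nat \<times> nat) \<Rightarrow> (nat \<times> nat)" where
  "ray_shift = (\<lambda>(i, k). if i = 0 \<and> 2 \<le> k then (0, k + 1) else if i = 1 \<and> 2 \<le> k then (1, k - 1)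
                   else if i = 1 \<and> k = 1 then (0, 2) else (i, k))"

lemma ray_shift_in_houghton_carrier:
  assumes "2 \<le> n"
  shows "ray_shift \<in> houghton_carrier n"
proof -
  define ray_shift_inv :: "(nat \<times> nat) \<Rightarrow> (nat \<times> nat)" where
    "ray_shift_inv = (\<lambda>(i, k). if i = 0 \<and> 3 \<le> k then (0, k - 1) else if i = 0 \<and> k = 2 then (1, 1)
                       else if i = 1 \<and> 1 \<le> k then (1, k + 1) else (i, k))"
  define t :: "nat \<Rightarrow> int" where "t i = (if i = 0 then 1 else if i = 1 then -1 else 0)" for i
  have bij: "bij_betw ray_shift (Rn n) (Rn n)"
    by (rule bij_betw_byWitness[where f' = ray_shift_inv])
      (use assms in \<open>auto simp: ray_shift_def ray_shift_inv_def split: if_splits\<close>)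
  have fixed: "\<forall>x. x \<notin> Rn n \<longrightarrow> ray_shift x = x"
    using assms by (auto simp: ray_shift_def)
  have translation: "\<forall>i<n. \<forall>k. 2 \<le> k \<and> 1 \<le> k \<longrightarrow>
      fst (ray_shift (i, k)) = i \<and> int (snd (ray_shift (i, k))) = int k + t i"
    by (auto simp: ray_shift_def t_def)
  show ?thesis unfolding mem_houghton_carrier
    by (intro conjI bij fixed exI[of _ 2] exI[of _ t] translation)
qed

lemma funpow_ray_shift_fixed: "(ray_shift ^^ k) (0, 1) = (0, 1)"
  by (induction k) (simp_all add: ray_shift_def)

lemma funpow_ray_shift_ray0: "2 \<le> j \<Longrightarrow> (ray_shift ^^ k) (0, j) = (0, j + k)"
  by (induction k) (simp_all add: ray_shift_def)

lemma power_central_houghton_eq_one: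
  assumes n: "2 \<le> n" and x: "x \<in> carrier (houghton n)" and "power_central (houghton n) x"
  shows "x = \<one>\<^bsub>houghton n\<^esub>"
proof (rule ccontr)
  interpret group "houghton n" by (rule group_houghton)
  assume "x \<noteq> \<one>\<^bsub>houghton n\<^esub>"
  then obtain p where px: "x p \<noteq> p" by (auto simp: fun_eq_iff)
  have p: "p \<in> Rn n" using houghton_carrier_fixes[of x n p] x px by auto
  then have q: "x p \<in> Rn n" using bij_betwE[OF houghton_carrier_bij_betw] x by auto
  obtain \<sigma> where \<sigma>: "\<sigma> \<in> houghton_carrier n" "\<sigma> (0, 1) = p" "\<sigma> (0, 2) = x p"
    using houghton_two_transitive[of "(0, 1)" n "(0, 2)" p "x p"] n p q px by auto
  text \<open>The conjugate \<open>y\<close> of \<open>ray_shift\<close> fixes \<open>p\<close> and moves \<open>x p\<close> along an infinite orbit.\<close>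
  define y where "y = inv\<^bsub>houghton n\<^esub> \<sigma> \<otimes>\<^bsub>houghton n\<^esub> ray_shift \<otimes>\<^bsub>houghton n\<^esub> \<sigma>"
  have ray_shift: "ray_shift \<in> carrier (houghton n)" using ray_shift_in_houghton_carrier[OF n] by simp
  have y_pow: "y [^]\<^bsub>houghton n\<^esub> k = \<sigma> \<circ> ray_shift ^^ k \<circ> inv\<^bsub>houghton n\<^esub> \<sigma>" for k :: nat
    unfolding y_def using conj_nat_pow[of \<sigma> ray_shift k] \<sigma>(1) ray_shift
    by (simp add: houghton_nat_pow comp_assoc)
  have "y \<in> carrier (houghton n)"
    unfolding y_def using \<sigma>(1) ray_shift by (intro m_closed inv_closed) simp_all
  with assms(3) obtain k :: nat where k: "k \<ge> 1"
    "y [^]\<^bsub>houghton n\<^esub> k \<otimes>\<^bsub>houghton n\<^esub> x = x \<otimes>\<^bsub>houghton n\<^esub> y [^]\<^bsub>houghton n\<^esub> k"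
    unfolding power_central_def by blast
  have "(inv\<^bsub>houghton n\<^esub> \<sigma>) p = (0, 1)" "(inv\<^bsub>houghton n\<^esub> \<sigma>) (x p) = (0, 2)"
    using houghton_m_inv_apply[OF \<sigma>(1), of "(0, 1)"] houghton_m_inv_apply[OF \<sigma>(1), of "(0, 2)"]
      \<sigma>(2,3) by simp_all
  then have "(y [^]\<^bsub>houghton n\<^esub> k) p = p" "(y [^]\<^bsub>houghton n\<^esub> k) (x p) = \<sigma> (0, 2 + k)"
    using funpow_ray_shift_fixed[of k] funpow_ray_shift_ray0[of 2 k] \<sigma>(2) by (simp_all add: y_pow)
  moreover have "x ((y [^]\<^bsub>houghton n\<^esub> k) p) = (y [^]\<^bsub>houghton n\<^esub> k) (x p)"
    using fun_cong[OF k(2), of p] by simp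
  ultimately have "\<sigma> (0, 2) = \<sigma> (0, 2 + k)" using \<sigma>(3) by simp
  moreover have "inj_on \<sigma> (Rn n)" using houghton_carrier_bij_betw[OF \<sigma>(1)] by (rule bij_betw_imp_inj_on)
  ultimately have "(0::nat, 2::nat) = (0, 2 + k)" using n by (auto dest: inj_onD)
  with k(1) show False by simp
qed

theorem mainTheorem9:
  fixes n :: nat and S :: "((nat \<times> nat) \<Rightarrow> (nat \<times> nat)) set"
    and A B A' B' :: "((nat \<times> nat) \<Rightarrow> (nat \<times> nat)) set"
    and \<phi> \<psi> :: "((nat \<times> nat) \<Rightarrow> (nat \<times> nat)) \<Rightarrow> ((nat \<times> nat) \<Rightarrow> (nat \<times> nat))"
  assumes "n \<ge> 2"
    and "finite S" and "S \<subseteq> carrier (houghton n)"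
    and "generate (houghton n) S = carrier (houghton n)"
    and "commensuration (houghton n) A B \<phi>"
    and "commensuration (houghton n) A' B' \<psi>"
    and "bounded_distance (houghton n) S (comm_qi (houghton n) S A \<phi>) (comm_qi (houghton n) S A' \<psi>)"
  shows "comm_equiv (houghton n) A \<phi> A' \<psi>"
proof -
  interpret generated_group "houghton n" S
    by (intro generated_group.intro generated_group_axioms.intro group_houghton assms(3,4))
  show ?thesis
    using power_central_houghton_eq_one[OF assms(1)]
    by (rule comm_equiv_if_bounded_distance[OF assms(2) _ assms(5-7)])
qed

end
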